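(* Let $y,z$ be nonzero complex numbers and let $u_n=u_n(y,z)$, $v_n=v_n(y,z)$ be the Lucas sequences of the first and second kind. Let $x,r\in\mathbb{C}$ and let $c,n$ be integers with $n\ge c$; if $c<0$ assume moreover $r\neq 0$. Then \[ \sum_{k=c}^n(-1)^k x^{n-k}r^k\big(r v_{k+1}(y,z)+(xy+2rz)u_k(y,z)\big)=(-1)^n y\,r^{n+1}u_{n+1}(y,z)+(-1)^c r^c y\,x^{n-c+1}u_c(y,z) \] and \[ \sum_{k=c}^n(-1)^k x^{n-k}r^k\big((y^2-4z)r\,u_{k+1}(y,z)+(xy+2rz)v_k(y,z)\big)=(-1)^n y\,r^{n+1}v_{n+1}(y,z)+(-1)^c r^c y\,x^{n-c+1}v_c(y,z). \]
   Context: For nonzero complex numbers $y,z$, the Lucas sequences $u_n(y,z)$ and $v_n(y,z)$ are defined by $u_0=0$, $u_1=1$, $v_0=2$, $v_1=y$ and $w_n=y\,w_{n-1}-z\,w_{n-2}$ for $n\ge 2$ (for $w=u$ and $w=v$), and extended to negative indices by $u_{-n}(y,z)=-u_n(y,z)/z^n$ and $v_{-n}(y,z)=v_n(y,z)/z^n$. *)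

theory Defs
  imports Complex_Main
begin

fun lucas_u_nat :: "complex \<Rightarrow> complex \<Rightarrow> nat \<Rightarrow> complex" where
  "lucas_u_nat y z 0 = 0"
| "lucas_u_nat y z (Suc 0) = 1"
| "lucas_u_nat y z (Suc (Suc n)) = y * lucas_u_nat y z (Suc n) - z * lucas_u_nat y z n"

fun lucas_v_nat :: "complex \<Rightarrow> complex \<Rightarrow> nat \<Rightarrow> complex" where
  "lucas_v_nat y z 0 = 2"
| "lucas_v_nat y z (Suc 0) = y"
| "lucas_v_nat y z (Suc (Suc n)) = y * lucas_v_nat y z (Suc n) - z * lucas_v_nat y z n"

definition lucas_u :: "complex \<Rightarrow> complex \<Rightarrow> int \<Rightarrow> complex" where
  "lucas_u y z k = (if 0 \<le> k then lucas_u_nat y z (nat k)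
                    else - lucas_u_nat y z (nat (-k)) / z ^ nat (-k))"

definition lucas_v :: "complex \<Rightarrow> complex \<Rightarrow> int \<Rightarrow> complex" where
  "lucas_v y z k = (if 0 \<le> k then lucas_v_nat y z (nat k)
                    else lucas_v_nat y z (nat (-k)) / z ^ nat (-k))"

end

theory Submission
  imports Defs
begin

(* The identities  v_{k+1} = y u_{k+1} - 2z u_k  and  y v_{k+1} = (y^2 - 4z) u_{k+1} + 2z v_k,
   valid for all integers k because both sides obey the Lucas recurrence, turn the k-th
   summand into  (-1)^k r^k (r y w_{k+1} + x y w_k) = G_k - x G_{k-1}  for w = u, v, where
   G_k = (-1)^k y r^{k+1} w_{k+1}.  Weighted by x^{n-k}, the sum therefore telescopes. *)

lemma recurrence_extends_to_negative_indices:
  fixes w :: "nat \<Rightarrow> 'a::field" and W :: "int \<Rightarrow> 'a"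
  assumes "z \<noteq> 0"
    and rec: "\<And>n. w (Suc (Suc n)) = y * w (Suc n) - z * w n"
    and nonneg: "\<And>n. W (int n) = w n"
    and neg: "\<And>n. W (- int n) = e * w n / z ^ n"
    and at_minus_one: "W 1 = y * W 0 - z * W (-1)"
  shows "W (k + 2) = y * W (k + 1) - z * W k"
proof -
  have "(\<exists>m. k = int m) \<or> k = -1 \<or> (\<exists>m. k = - int m - 2)"
    by presburger
  then consider m where "k = int m" | "k = -1" | m where "k = - int m - 2"
    by blast
  then show ?thesis
  proof cases
    case (1 m)
    then show ?thesis
      using nonneg[of m] nonneg[of "Suc m"] nonneg[of "Suc (Suc m)"] rec[of m]
      by (simp add: add.commute)
  next
    case 2
    then show ?thesis using at_minus_one by simp
  next
    case (3 m)
    then have indices: "k + 2 = - int m" "k + 1 = - int (Suc m)" "k = - int (Suc (Suc m))"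
      by simp_all
    show ?thesis
      unfolding indices(1,2) unfolding indices(3) neg rec
      using \<open>z \<noteq> 0\<close> by (simp add: field_simps)
  qed
qed

lemma lucas_u_neg: "lucas_u y z (- int n) = - lucas_u_nat y z n / z ^ n"
  by (cases n) (simp_all add: lucas_u_def nat_add_distrib)

lemma lucas_v_neg: "lucas_v y z (- int n) = lucas_v_nat y z n / z ^ n"
  by (cases n) (simp_all add: lucas_v_def nat_add_distrib)

lemma lucas_u_rec:
  assumes "z \<noteq> 0"
  shows "lucas_u y z (k + 2) = y * lucas_u y z (k + 1) - z * lucas_u y z k"
  by (rule recurrence_extends_to_negative_indices[where w = "lucas_u_nat y z" and e = "-1"])
     (use assms in \<open>simp_all add: lucas_u_neg lucas_u_def\<close>)

lemma lucas_v_rec: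
  assumes "z \<noteq> 0"
  shows "lucas_v y z (k + 2) = y * lucas_v y z (k + 1) - z * lucas_v y z k"
  by (rule recurrence_extends_to_negative_indices[where w = "lucas_v_nat y z" and e = "1"])
     (use assms in \<open>simp_all add: lucas_v_neg lucas_v_def\<close>)

lemma recurrence_vanishes_if_initial_values_vanish:
  fixes h :: "int \<Rightarrow> 'a::idom"
  assumes "z \<noteq> 0"
    and rec: "\<And>k. h (k + 2) = y * h (k + 1) - z * h k"
    and "h 0 = 0" and "h 1 = 0"
  shows "h k = 0"
proof -
  have "h k = 0 \<and> h (k + 1) = 0"
  proof (induction k rule: int_induct[where k = 0])
    case base
    then show ?case using \<open>h 0 = 0\<close> \<open>h 1 = 0\<close> by simp
  next
    case (step1 i)
    then show ?case using rec[of i] by (simp add: add.assoc)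
  next
    case (step2 i)
    then show ?case using rec[of "i - 1"] \<open>z \<noteq> 0\<close> by (simp add: add.commute)
  qed
  then show ?thesis ..
qed

lemma lucas_v_succ_conv_u:
  assumes "z \<noteq> 0"
  shows "lucas_v y z (k + 1) = y * lucas_u y z (k + 1) - 2 * z * lucas_u y z k"
proof -
  let ?h = "\<lambda>k. lucas_v y z (k + 1) - (y * lucas_u y z (k + 1) - 2 * z * lucas_u y z k)"
  have "?h k = 0"
  proof (rule recurrence_vanishes_if_initial_values_vanish[OF assms])
    fix k
    show "?h (k + 2) = y * ?h (k + 1) - z * ?h k"
      using lucas_u_rec[OF assms, of y "k + 1"] lucas_v_rec[OF assms, of y "k + 1"]
        lucas_u_rec[OF assms, of y k]
      by (simp add: algebra_simps) algebra
  qed (simp_all add: lucas_u_def lucas_v_def numeral_2_eq_2)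
  then show ?thesis by simp
qed

lemma mult_lucas_v_succ:
  assumes "z \<noteq> 0"
  shows "y * lucas_v y z (k + 1) = (y^2 - 4 * z) * lucas_u y z (k + 1) + 2 * z * lucas_v y z k"
  using lucas_v_succ_conv_u[OF assms, of y k] lucas_v_succ_conv_u[OF assms, of y "k - 1"]
    lucas_u_rec[OF assms, of y "k - 1"]
  by (simp add: algebra_simps) algebra

lemma sum_power_weighted_telescope:
  fixes g G :: "int \<Rightarrow> 'a::comm_ring_1"
  assumes "c \<le> n" and g_eq: "\<And>k. c \<le> k \<Longrightarrow> g k = G k - x * G (k - 1)"
  shows "(\<Sum>k\<in>{c..n}. x ^ nat (n - k) * g k) = G n - x ^ nat (n - c + 1) * G (c - 1)"
  using \<open>c \<le> n\<close>
proof (induction n rule: int_ge_induct)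
  case base
  then show ?case using g_eq[of c] by simp
next
  case (step n)
  have "(\<Sum>k\<in>{c..n + 1}. x ^ nat (n + 1 - k) * g k)
      = g (n + 1) + x * (\<Sum>k\<in>{c..n}. x ^ nat (n - k) * g k)"
  proof -
    have "{c..n + 1} = insert (n + 1) {c..n}" using step.hyps by auto
    moreover have "x ^ nat (n + 1 - k) = x * x ^ nat (n - k)" if "k \<le> n" for k
    proof -
      have "nat (n + 1 - k) = Suc (nat (n - k))" using that by simp
      then show ?thesis by simp
    qed
    ultimately show ?thesis by (simp add: sum_distrib_left mult.assoc)
  qed
  also have "\<dots> = G (n + 1) - x ^ nat (n + 1 - c + 1) * G (c - 1)"
  proof -
    have "nat (n + 1 - c + 1) = Suc (nat (n - c + 1))" using step.hyps by simp
    then show ?thesis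
      unfolding step.IH using g_eq[of "n + 1"] step.hyps by (simp add: algebra_simps)
  qed
  finally show ?case .
qed

lemma sum_alternating_shift_telescope:
  fixes w :: "int \<Rightarrow> 'a::field"
  assumes "c \<le> n" and r: "c < 0 \<longrightarrow> r \<noteq> 0"
  shows "(\<Sum>k\<in>{c..n}. (-1) powi k * x ^ nat (n - k) * r powi k * (r * w (k + 1) + x * w k))
       = (-1) powi n * r powi (n + 1) * w (n + 1)
         + (-1) powi c * r powi c * x ^ nat (n - c + 1) * w c"
proof -
  define G where "G k = (-1) powi k * r powi (k + 1) * w (k + 1)" for k
  have sign: "(-1::'a) powi (k - 1) = - ((-1) powi k)" for k
    by (simp add: power_int_diff)
  have "(-1) powi k * r powi k * (r * w (k + 1) + x * w k) = G k - x * G (k - 1)"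
    if "c \<le> k" for k
  proof -
    \<comment> \<open>fails only for r = 0 and k = -1, since 0 powi 0 = 1\<close>
    have "r powi (k + 1) = r powi k * r"
      using r that by (intro power_int_add_1) auto
    then show ?thesis by (simp add: G_def sign algebra_simps)
  qed
  then have "(\<Sum>k\<in>{c..n}. x ^ nat (n - k) * ((-1) powi k * r powi k * (r * w (k + 1) + x * w k)))
      = G n - x ^ nat (n - c + 1) * G (c - 1)"
    by (rule sum_power_weighted_telescope[OF \<open>c \<le> n\<close>])
  then show ?thesis by (simp add: G_def sign algebra_simps)
qed

theorem theorem2:
  fixes y z x r :: complex and c n :: int
  assumes "y \<noteq> 0" and "z \<noteq> 0" and "c \<le> n" and "c < 0 \<longrightarrow> r \<noteq> 0"
  shows "((\<Sum>k\<in>{c..n}. (-1) powi k * x ^ nat (n - k) * r powi k *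
            (r * lucas_v y z (k + 1) + (x * y + 2 * r * z) * lucas_u y z k))
         = (-1) powi n * y * r powi (n + 1) * lucas_u y z (n + 1)
           + (-1) powi c * r powi c * y * x ^ nat (n - c + 1) * lucas_u y z c) \<and>
         ((\<Sum>k\<in>{c..n}. (-1) powi k * x ^ nat (n - k) * r powi k *
            ((y^2 - 4 * z) * r * lucas_u y z (k + 1) + (x * y + 2 * r * z) * lucas_v y z k))
         = (-1) powi n * y * r powi (n + 1) * lucas_v y z (n + 1)
           + (-1) powi c * r powi c * y * x ^ nat (n - c + 1) * lucas_v y z c)"
proof -
  have u_summand: "r * lucas_v y z (k + 1) + (x * y + 2 * r * z) * lucas_u y z k
      = r * (y * lucas_u y z (k + 1)) + x * (y * lucas_u y z k)" for k
    using lucas_v_succ_conv_u[OF \<open>z \<noteq> 0\<close>, of y k] by algebra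
  have v_summand: "(y^2 - 4 * z) * r * lucas_u y z (k + 1) + (x * y + 2 * r * z) * lucas_v y z k
      = r * (y * lucas_v y z (k + 1)) + x * (y * lucas_v y z k)" for k
    using mult_lucas_v_succ[OF \<open>z \<noteq> 0\<close>, of y k] by algebra
  show ?thesis
    unfolding u_summand v_summand
    using sum_alternating_shift_telescope[OF assms(3,4), of x "\<lambda>k. y * lucas_u y z k"]
      sum_alternating_shift_telescope[OF assms(3,4), of x "\<lambda>k. y * lucas_v y z k"]
    by (simp add: mult_ac)
qed

end
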